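(* Fix integers $n,d,k,L\ge1$ and a temperature $s>0$. Consider the $L$-layer linear Transformer acting on $Z_l\in\mathbb{R}^{(d+2k)\times n}$ by $$Z_{l+1}=Z_l+W^V_l Z_l Z_l^\top (W^Q_l)^\top W^K_l Z_l+W^R_l Z_l,$$ with weights $W^V_l,W^Q_l,W^K_l,W^R_l\in\mathbb{R}^{(d+2k)\times(d+2k)}$ and input $Z_0^\top=\begin{bmatrix}B, & \Psi, & 0_{n\times k}\end{bmatrix}$, where $B\in\mathbb{R}^{n\times d}$ is the incidence matrix of a graph and $\Psi=[\psi_1,\dots,\psi_k]\in\mathbb{R}^{n\times k}$ with $\langle\psi_i,\vec 1\rangle=0$ for all $i$. Then there exists a configuration of the weights such that for every connected input graph with $n$ vertices and $d$ edges whose Laplacian $\mathcal{L}=BB^\top$ has largest eigenvalue $\lambda_{\max}$ satisfying $8s\lambda_{\max}\le L$, and for all $i=1,\dots,k$, $$\left\|[Z_L]_{d+k+i}^\top-e^{-s\mathcal{L}}\psi_i\right\|_2\le 2^{-L+8s\lambda_{\max}+1}\|\psi_i\|_2 .$$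
   Context: A graph has $n$ vertices and $d$ edges with positive resistances $r_j$; graphs are assumed connected. With an arbitrary orientation of each edge, the incidence matrix $B\in\mathbb{R}^{n\times d}$ has $B_{ij}=-1/\sqrt{r_j}$ if $e_j$ leaves vertex $i$, $+1/\sqrt{r_j}$ if $e_j$ enters vertex $i$, and $0$ otherwise; the Laplacian is $\mathcal{L}=BB^\top$ and $e^{-s\mathcal{L}}$ is the matrix exponential. $[Z]_j$ denotes the $j$-th row of $Z$; $\vec 1$ is the all-ones vector. *)

theory Defs
  imports "Jordan_Normal_Form.Char_Poly"
begin

definition mat_exp :: "real mat \<Rightarrow> real mat" where
  "mat_exp A = mat (dim_row A) (dim_col A)
      (\<lambda>(i,j). (\<Sum>m. (A ^\<^sub>m m) $$ (i,j) / fact m))"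

definition vnorm2 :: "real vec \<Rightarrow> real" where
  "vnorm2 v = sqrt (\<Sum>i<dim_vec v. (v $ i)^2)"

(* A graph on vertices {0..<n} with d edges: edge j (j<d) is oriented from
   fst (ed j) to snd (ed j) and has resistance r j > 0. No self-loops. *)
definition wf_graph :: "nat \<Rightarrow> nat \<Rightarrow> (nat \<Rightarrow> nat \<times> nat) \<Rightarrow> (nat \<Rightarrow> real) \<Rightarrow> bool" where
  "wf_graph n d ed r \<longleftrightarrow> (\<forall>j<d. fst (ed j) < n \<and> snd (ed j) < n \<and> fst (ed j) \<noteq> snd (ed j) \<and> r j > 0)"

definition adj :: "nat \<Rightarrow> (nat \<Rightarrow> nat \<times> nat) \<Rightarrow> nat \<Rightarrow> nat \<Rightarrow> bool" where
  "adj d ed u v \<longleftrightarrow> (\<exists>j<d. ed j = (u,v) \<or> ed j = (v,u))"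

definition connected_graph :: "nat \<Rightarrow> nat \<Rightarrow> (nat \<Rightarrow> nat \<times> nat) \<Rightarrow> bool" where
  "connected_graph n d ed \<longleftrightarrow> (\<forall>u<n. \<forall>v<n. (adj d ed)\<^sup>*\<^sup>* u v)"

definition incidence :: "nat \<Rightarrow> nat \<Rightarrow> (nat \<Rightarrow> nat \<times> nat) \<Rightarrow> (nat \<Rightarrow> real) \<Rightarrow> real mat" where
  "incidence n d ed r = mat n d (\<lambda>(i,j).
      if fst (ed j) = i then - 1 / sqrt (r j)
      else if snd (ed j) = i then 1 / sqrt (r j) else 0)"

definition laplacian :: "real mat \<Rightarrow> real mat" where
  "laplacian B = B * transpose_mat B"

definition lambda_max :: "real mat \<Rightarrow> real" where
  "lambda_max A = Max {x. eigenvalue A x}"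

definition tf_layer :: "real mat \<Rightarrow> real mat \<Rightarrow> real mat \<Rightarrow> real mat \<Rightarrow> real mat \<Rightarrow> real mat" where
  "tf_layer WV WQ WK WR Z =
     Z + WV * Z * transpose_mat Z * transpose_mat WQ * WK * Z + WR * Z"

fun tf_run :: "(nat \<Rightarrow> real mat) \<Rightarrow> (nat \<Rightarrow> real mat) \<Rightarrow> (nat \<Rightarrow> real mat) \<Rightarrow> (nat \<Rightarrow> real mat)
               \<Rightarrow> nat \<Rightarrow> real mat \<Rightarrow> real mat" where
  "tf_run WV WQ WK WR 0 Z = Z"
| "tf_run WV WQ WK WR (Suc l) Z = tf_layer (WV l) (WQ l) (WK l) (WR l) (tf_run WV WQ WK WR l Z)"

definition input_Z0 :: "nat \<Rightarrow> nat \<Rightarrow> nat \<Rightarrow> real mat \<Rightarrow> real mat \<Rightarrow> real mat" where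
  "input_Z0 n d k B Psi = mat (d + 2*k) n (\<lambda>(i,j).
      if i < d then B $$ (j,i) else if i < d + k then Psi $$ (j, i - d) else 0)"

end

theory Submission
  imports Defs "Jordan_Normal_Form.Spectral_Radius" "HOL-Analysis.Function_Topology" "HOL-Analysis.L2_Norm"
begin

(* With W_Q = 1 and W_K the projection onto the first d coordinates, the attention term of every
   layer is Z^T W_K Z = B B^T = L, because the first d rows of the state always hold B^T.
   W_V scales the next k rows by -s/(l+1) and W_R cancels them in the residual stream while
   adding them to the last k rows; so after l layers these rows hold (-sL)^l psi_i / l! and the
   Taylor polynomial sum_{m<l} (-sL)^m psi_i / m! of e^{-sL} psi_i.
   The error is the tail of the exponential series. Since L is symmetric positive semidefinite,
   |L x| <= lambda_max |x| (the maximum of the Rayleigh quotient is an eigenvalue), so the tail is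
   at most sum_{m>=L} (s lambda_max)^m / m! |psi_i| <= 2^-L e^(2 s lambda_max) |psi_i|,
   and e^2 <= 2^8. *)

section \<open>Euclidean norm and inner product\<close>

lemma vnorm2_eq_sqrt_scalar_prod: "vnorm2 v = sqrt (v \<bullet> v)"
  unfolding vnorm2_def scalar_prod_def by (simp add: power2_eq_square lessThan_atLeast0)

lemma vnorm2_eq_L2_set: "vnorm2 v = L2_set (\<lambda>i. v $ i) {..<dim_vec v}"
  unfolding vnorm2_def L2_set_def by simp

lemma vnorm2_smult: "vnorm2 (c \<cdot>\<^sub>v v) = \<bar>c\<bar> * vnorm2 v"
  unfolding vnorm2_def by (simp add: power_mult_distrib real_sqrt_mult flip: sum_distrib_left)

lemma abs_index_le_vnorm2: "i < dim_vec v \<Longrightarrow> \<bar>v $ i\<bar> \<le> vnorm2 v"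
  unfolding vnorm2_def
  by (metis finite_lessThan lessThan_iff member_le_sum real_sqrt_abs real_sqrt_le_mono zero_le_power2)

lemma vnorm2_unit_vec: "i < n \<Longrightarrow> vnorm2 (unit_vec n i) = 1"
  unfolding vnorm2_def by (simp add: unit_vec_def if_distrib[of "\<lambda>x. x^2"] cong: if_cong)

lemma scalar_prod_self_nonneg: "0 \<le> (v :: real vec) \<bullet> v"
  unfolding scalar_prod_def by (auto intro: sum_nonneg)

lemma scalar_prod_self_eq_0: "(v :: real vec) \<bullet> v = 0 \<Longrightarrow> v = 0\<^sub>v (dim_vec v)"
  unfolding scalar_prod_def by (subst (asm) sum_nonneg_eq_0_iff) (auto intro!: eq_vecI)

lemma scalar_prod_vec: "vec n f \<bullet> vec n g = (\<Sum>i<n. f i * g i)"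
  unfolding scalar_prod_def lessThan_atLeast0 by simp

lemma smult_mat_mult_vec:
  "A \<in> carrier_mat n n \<Longrightarrow> v \<in> carrier_vec n \<Longrightarrow> (c \<cdot>\<^sub>m A) *\<^sub>v v = c \<cdot>\<^sub>v (A *\<^sub>v v)"
  by (rule eq_vecI) (auto simp: scalar_prod_def sum_distrib_left mult.assoc)

lemma L2_set_scale: "L2_set (\<lambda>i. c * f i) A = \<bar>c\<bar> * L2_set f A"
  unfolding L2_set_def by (simp add: power_mult_distrib real_sqrt_mult flip: sum_distrib_left)

lemma L2_set_suminf_le:
  fixes f :: "nat \<Rightarrow> 'a \<Rightarrow> real"
  assumes "finite I" and sums: "\<And>i. i \<in> I \<Longrightarrow> (\<lambda>m. f m i) sums g i"
    and le: "\<And>m. L2_set (f m) I \<le> h m" and "summable h"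
  shows "L2_set g I \<le> suminf h"
proof (rule LIMSEQ_le_const2)
  show "(\<lambda>N. L2_set (\<lambda>i. \<Sum>m<N. f m i) I) \<longlonglongrightarrow> L2_set g I"
    unfolding L2_set_def using sums
    by (intro tendsto_real_sqrt tendsto_sum tendsto_power) (auto simp: sums_def)
  have "0 \<le> h m" for m using le[of m] L2_set_nonneg[of "f m" I] by linarith
  show "\<exists>N0. \<forall>N\<ge>N0. L2_set (\<lambda>i. \<Sum>m<N. f m i) I \<le> suminf h"
  proof (intro exI allI impI)
    fix N
    have "L2_set (\<lambda>i. \<Sum>m<N. f m i) I \<le> (\<Sum>m<N. L2_set (f m) I)"
      by (induction N) (auto simp: L2_set_0' intro: order.trans[OF L2_set_triangle_ineq])
    also have "\<dots> \<le> (\<Sum>m<N. h m)" using le by (intro sum_mono) auto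
    also have "\<dots> \<le> suminf h" using \<open>summable h\<close> \<open>\<And>m. 0 \<le> h m\<close> by (intro sum_le_suminf) auto
    finally show "L2_set (\<lambda>i. \<Sum>m<N. f m i) I \<le> suminf h" .
  qed
qed

section \<open>The spectral bound for positive semidefinite matrices\<close>

lemma quadratic_nonneg_imp_discrim_le:
  fixes a b c :: real
  assumes nonneg: "\<And>t. 0 \<le> a * t^2 + b * t + c"
  shows "b^2 \<le> 4 * a * c"
proof -
  have "0 \<le> a"
  proof (rule ccontr)
    assume "\<not> 0 \<le> a"
    define t where "t = (\<bar>b\<bar> + \<bar>c\<bar> + 1) / - a + 1"
    have t: "1 \<le> t" "a * t \<le> - (\<bar>b\<bar> + \<bar>c\<bar> + 1)"
      using \<open>\<not> 0 \<le> a\<close> by (auto simp: t_def field_simps)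
    have "a * t^2 + b * t + c = t * (a * t + b) + c" by (simp add: power2_eq_square algebra_simps)
    also have "\<dots> \<le> t * (- (\<bar>c\<bar> + 1)) + c"
      using t by (intro add_right_mono mult_left_mono) auto
    also have "\<dots> < 0"
      using t mult_right_mono[OF t(1), of "\<bar>c\<bar> + 1"] by (simp add: algebra_simps)
    finally have "a * t^2 + b * t + c < 0" .
    with nonneg show False by (meson not_le)
  qed
  show ?thesis
  proof (cases "a = 0")
    case True
    have "b = 0"
    proof (rule ccontr)
      assume "b \<noteq> 0"
      have "0 \<le> b * (- (\<bar>c\<bar> + 1) / b) + c" using nonneg[of "- (\<bar>c\<bar> + 1) / b"] True by simp
      with \<open>b \<noteq> 0\<close> show False by simp
    qed
    with True show ?thesis by simp
  next
    case False
    with \<open>0 \<le> a\<close> have "0 < a" by simp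
    have "0 \<le> a * (- b / (2 * a))^2 + b * (- b / (2 * a)) + c" by (rule nonneg)
    also have "\<dots> = (4 * a * c - b^2) / (4 * a)"
      using \<open>0 < a\<close> by (simp add: field_simps power2_eq_square)
    finally show ?thesis using \<open>0 < a\<close> by (simp add: zero_le_divide_iff)
  qed
qed

lemma symmetric_form_swap:
  fixes A :: "real mat"
  assumes A: "A \<in> carrier_mat n n" and sym: "transpose_mat A = A"
    and x: "x \<in> carrier_vec n" and y: "y \<in> carrier_vec n"
  shows "y \<bullet> (A *\<^sub>v x) = x \<bullet> (A *\<^sub>v y)"
  using transpose_vec_mult_scalar[OF A x y] comm_scalar_prod[OF _ x, of "A *\<^sub>v y"] A y sym by simp

lemma symmetric_form_expand:
  fixes A :: "real mat"
  assumes A: "A \<in> carrier_mat n n" and sym: "transpose_mat A = A"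
    and x: "x \<in> carrier_vec n" and y: "y \<in> carrier_vec n"
  shows "(x + t \<cdot>\<^sub>v y) \<bullet> (A *\<^sub>v (x + t \<cdot>\<^sub>v y))
    = x \<bullet> (A *\<^sub>v x) + 2 * t * (y \<bullet> (A *\<^sub>v x)) + t^2 * (y \<bullet> (A *\<^sub>v y))"
proof -
  have Ax: "A *\<^sub>v x \<in> carrier_vec n" and Ay: "A *\<^sub>v y \<in> carrier_vec n" using A x y by auto
  have "A *\<^sub>v (x + t \<cdot>\<^sub>v y) = A *\<^sub>v x + t \<cdot>\<^sub>v (A *\<^sub>v y)"
    using A x y by (simp add: mult_add_distrib_mat_vec mult_mat_vec)
  then show ?thesis
    using x y Ax Ay symmetric_form_swap[OF A sym x y]
    by (simp add: add_scalar_prod_distrib[of _ n] scalar_prod_add_distrib[of _ n] power2_eq_square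
        algebra_simps)
qed

lemma psd_cauchy_schwarz:
  fixes A :: "real mat"
  assumes A: "A \<in> carrier_mat n n" and sym: "transpose_mat A = A"
    and psd: "\<And>z. z \<in> carrier_vec n \<Longrightarrow> 0 \<le> z \<bullet> (A *\<^sub>v z)"
    and x: "x \<in> carrier_vec n" and y: "y \<in> carrier_vec n"
  shows "(y \<bullet> (A *\<^sub>v x))^2 \<le> (x \<bullet> (A *\<^sub>v x)) * (y \<bullet> (A *\<^sub>v y))"
proof -
  have "0 \<le> (y \<bullet> (A *\<^sub>v y)) * t^2 + (2 * (y \<bullet> (A *\<^sub>v x))) * t + x \<bullet> (A *\<^sub>v x)" for t
    using psd[of "x + t \<cdot>\<^sub>v y"] x y unfolding symmetric_form_expand[OF A sym x y] by (simp add: algebra_simps)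
  from quadratic_nonneg_imp_discrim_le[OF this] show ?thesis by (simp add: power2_eq_square mult.commute)
qed

(* Vectors of type vec carry no topology, so the unit sphere of R^n is taken in nat => real with
   the product topology, as a closed subset of a product of compact intervals. *)
lemma compact_unit_sphere_coordinates:
  "compact {f :: nat \<Rightarrow> real. (\<forall>i\<ge>n. f i = 0) \<and> vec n f \<bullet> vec n f = 1}"
proof -
  define box where "box i = (if i < n then {-1..1::real} else {0})" for i
  have "compact (Pi UNIV box)"
    using compactin_PiE[of "\<lambda>_. euclideanreal" UNIV box]
    by (auto simp: euclidean_product_topology PiE_UNIV_domain box_def)
  moreover have "closed {f :: nat \<Rightarrow> real. vec n f \<bullet> vec n f = 1}"
    unfolding scalar_prod_vec
    by (intro closed_Collect_eq continuous_intros continuous_on_product_coordinates)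
  moreover have "{f. (\<forall>i\<ge>n. f i = 0) \<and> vec n f \<bullet> vec n f = 1}
      = Pi UNIV box \<inter> {f. vec n f \<bullet> vec n f = 1}" (is "?S = ?K")
  proof
    show "?S \<subseteq> ?K"
    proof
      fix f assume f: "f \<in> ?S"
      have "\<bar>f i\<bar> \<le> 1" if "i < n" for i
        using abs_index_le_vnorm2[of i "vec n f"] f that by (simp add: vnorm2_eq_sqrt_scalar_prod)
      with f show "f \<in> ?K" by (auto simp: box_def abs_le_iff)
    qed
    show "?K \<subseteq> ?S"
    proof
      fix f assume f: "f \<in> ?K"
      have "f i = 0" if "n \<le> i" for i
        using Pi_mem[of f UNIV box i] f that by (simp add: box_def)
      then show "f \<in> ?S" using f by simp
    qed
  qed
  ultimately show ?thesis by (simp add: compact_Int_closed)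
qed

lemma rayleigh_quotient_attains_max:
  fixes A :: "real mat"
  assumes A: "A \<in> carrier_mat n n" and n: "0 < n"
  shows "\<exists>w \<in> carrier_vec n. w \<bullet> w = 1 \<and>
           (\<forall>x \<in> carrier_vec n. x \<bullet> x = 1 \<longrightarrow> x \<bullet> (A *\<^sub>v x) \<le> w \<bullet> (A *\<^sub>v w))"
proof -
  define S where "S = {f :: nat \<Rightarrow> real. (\<forall>i\<ge>n. f i = 0) \<and> vec n f \<bullet> vec n f = 1}"
  have "(\<lambda>i. if i = 0 then 1 else 0) \<in> S"
    using n unfolding S_def scalar_prod_vec by (simp add: if_distrib cong: if_cong)
  moreover have "continuous_on S (\<lambda>f. vec n f \<bullet> (A *\<^sub>v vec n f))"
  proof -
    have "vec n f \<bullet> (A *\<^sub>v vec n f) = (\<Sum>i<n. f i * (\<Sum>j<n. A $$ (i, j) * f j))" for f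
      using A by (simp add: scalar_prod_def mult_mat_vec_def lessThan_atLeast0)
    moreover have "continuous_on S (\<lambda>f. f i)" for i
      by (rule continuous_on_subset[OF continuous_on_product_coordinates]) simp
    ultimately show ?thesis
      by (simp only:) (intro continuous_intros)
  qed
  ultimately obtain f where f: "f \<in> S"
    and max: "\<And>g. g \<in> S \<Longrightarrow> vec n g \<bullet> (A *\<^sub>v vec n g) \<le> vec n f \<bullet> (A *\<^sub>v vec n f)"
    using continuous_attains_sup[OF compact_unit_sphere_coordinates[of n, folded S_def]] by blast
  show ?thesis
  proof (intro bexI conjI ballI impI)
    show "vec n f \<in> carrier_vec n" "vec n f \<bullet> vec n f = 1" using f by (auto simp: S_def)
    fix x :: "real vec" assume x: "x \<in> carrier_vec n" "x \<bullet> x = 1"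
    define g where "g i = (if i < n then x $ i else 0)" for i
    have g: "vec n g = x" using x by (auto simp: g_def)
    then have "g \<in> S" using x by (simp add: S_def g_def)
    from max[OF this] show "x \<bullet> (A *\<^sub>v x) \<le> vec n f \<bullet> (A *\<^sub>v vec n f)" by (simp add: g)
  qed
qed

lemma rayleigh_quotient_le_scaled:
  fixes A :: "real mat"
  assumes A: "A \<in> carrier_mat n n"
    and unit_le: "\<And>x. x \<in> carrier_vec n \<Longrightarrow> x \<bullet> x = 1 \<Longrightarrow> x \<bullet> (A *\<^sub>v x) \<le> \<sigma>"
    and x: "x \<in> carrier_vec n"
  shows "x \<bullet> (A *\<^sub>v x) \<le> \<sigma> * (x \<bullet> x)"
proof (cases "x \<bullet> x = 0")
  case True
  then have "x = 0\<^sub>v n" using scalar_prod_self_eq_0[OF True] x by auto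
  then show ?thesis using A by simp
next
  case False
  then have pos: "0 < x \<bullet> x" using scalar_prod_self_nonneg[of x] by simp
  define c where "c = 1 / sqrt (x \<bullet> x)"
  have c2: "c * c = 1 / (x \<bullet> x)" using pos by (simp add: c_def)
  have "(c \<cdot>\<^sub>v x) \<bullet> (c \<cdot>\<^sub>v x) = 1"
    using x c2 pos by (simp flip: mult.assoc)
  then have "(c \<cdot>\<^sub>v x) \<bullet> (A *\<^sub>v (c \<cdot>\<^sub>v x)) \<le> \<sigma>"
    using x by (intro unit_le) auto
  then have "c * c * (x \<bullet> (A *\<^sub>v x)) \<le> \<sigma>" using x A by (simp add: mult_mat_vec)
  then show ?thesis using pos unfolding c2 by (simp add: field_simps)
qed

lemma rayleigh_quotient_max_eigenvector:
  fixes A :: "real mat"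
  assumes A: "A \<in> carrier_mat n n" and sym: "transpose_mat A = A"
    and w: "w \<in> carrier_vec n" "w \<bullet> w = 1"
    and le: "\<And>x. x \<in> carrier_vec n \<Longrightarrow> x \<bullet> (A *\<^sub>v x) \<le> (w \<bullet> (A *\<^sub>v w)) * (x \<bullet> x)"
  shows "A *\<^sub>v w = (w \<bullet> (A *\<^sub>v w)) \<cdot>\<^sub>v w"
proof -
  define \<sigma> where "\<sigma> = w \<bullet> (A *\<^sub>v w)"
  have I: "1\<^sub>m n \<in> carrier_mat n n" "transpose_mat (1\<^sub>m n) = 1\<^sub>m n" by simp_all
  have orth: "y \<bullet> (A *\<^sub>v w) = \<sigma> * (y \<bullet> w)" if y: "y \<in> carrier_vec n" for y
  proof -
    have "0 \<le> (\<sigma> * (y \<bullet> y) - y \<bullet> (A *\<^sub>v y)) * t^2 + (2 * (\<sigma> * (y \<bullet> w) - y \<bullet> (A *\<^sub>v w))) * t + 0"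
      for t
      using le[of "w + t \<cdot>\<^sub>v y"] w y symmetric_form_expand[OF A sym w(1) y, of t]
        symmetric_form_expand[OF I w(1) y, of t]
      by (simp add: \<sigma>_def algebra_simps)
    from quadratic_nonneg_imp_discrim_le[OF this] show ?thesis by simp
  qed
  define y where "y = A *\<^sub>v w - \<sigma> \<cdot>\<^sub>v w"
  have y: "y \<in> carrier_vec n" using A w by (simp add: y_def)
  have Aw: "A *\<^sub>v w \<in> carrier_vec n" using A w by simp
  have "y \<bullet> (A *\<^sub>v w - \<sigma> \<cdot>\<^sub>v w) = y \<bullet> (A *\<^sub>v w) - y \<bullet> (\<sigma> \<cdot>\<^sub>v w)"
    by (rule scalar_prod_minus_distrib[OF y Aw]) (use w in simp)
  then have "y \<bullet> y = y \<bullet> (A *\<^sub>v w) - \<sigma> * (y \<bullet> w)"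
    using y w by (simp add: y_def[symmetric])
  then have "y = 0\<^sub>v n" using orth[OF y] scalar_prod_self_eq_0[of y] y by simp
  show ?thesis unfolding \<sigma>_def[symmetric]
  proof (rule eq_vecI)
    fix i assume "i < dim_vec (\<sigma> \<cdot>\<^sub>v w)"
    then have "y $ i = 0" and "i < n" using \<open>y = 0\<^sub>v n\<close> w by auto
    then show "(A *\<^sub>v w) $ i = (\<sigma> \<cdot>\<^sub>v w) $ i" using A w unfolding y_def by simp
  qed (use A w in simp)
qed

lemma psd_norm_mult_le_lambda_max:
  fixes A :: "real mat"
  assumes A: "A \<in> carrier_mat n n" and sym: "transpose_mat A = A"
    and psd: "\<And>z. z \<in> carrier_vec n \<Longrightarrow> 0 \<le> z \<bullet> (A *\<^sub>v z)" and n: "0 < n"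
  shows "0 \<le> lambda_max A"
    and "x \<in> carrier_vec n \<Longrightarrow> vnorm2 (A *\<^sub>v x) \<le> lambda_max A * vnorm2 x"
proof -
  obtain w where w: "w \<in> carrier_vec n" "w \<bullet> w = 1"
    and max: "\<And>x. x \<in> carrier_vec n \<Longrightarrow> x \<bullet> x = 1 \<Longrightarrow> x \<bullet> (A *\<^sub>v x) \<le> w \<bullet> (A *\<^sub>v w)"
    using rayleigh_quotient_attains_max[OF A n] by blast
  define \<sigma> where "\<sigma> = w \<bullet> (A *\<^sub>v w)"
  have le_\<sigma>: "z \<bullet> (A *\<^sub>v z) \<le> \<sigma> * (z \<bullet> z)" if "z \<in> carrier_vec n" for z
    unfolding \<sigma>_def using rayleigh_quotient_le_scaled[OF A max that] by simp
  have "eigenvector A w \<sigma>"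
    unfolding eigenvector_def \<sigma>_def
    using w A rayleigh_quotient_max_eigenvector[OF A sym w le_\<sigma>[unfolded \<sigma>_def]]
    by auto
  then have "eigenvalue A \<sigma>" unfolding eigenvalue_def by blast
  moreover have "finite {x. eigenvalue A x}"
    using card_finite_spectrum(1)[OF A] unfolding spectrum_def .
  ultimately have \<sigma>_le: "\<sigma> \<le> lambda_max A" unfolding lambda_max_def by simp
  moreover have "0 \<le> \<sigma>" unfolding \<sigma>_def using psd[OF w(1)] .
  ultimately show lam: "0 \<le> lambda_max A" by simp
  have le_lam: "z \<bullet> (A *\<^sub>v z) \<le> lambda_max A * (z \<bullet> z)" if "z \<in> carrier_vec n" for z
    using le_\<sigma>[OF that] mult_right_mono[OF \<sigma>_le scalar_prod_self_nonneg[of z]] by simp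
  assume x: "x \<in> carrier_vec n"
  define y where "y = A *\<^sub>v x"
  have y: "y \<in> carrier_vec n" using A x by (simp add: y_def)
  have "(y \<bullet> y)^2 = (y \<bullet> (A *\<^sub>v x))^2" by (simp add: y_def)
  also have "\<dots> \<le> (x \<bullet> (A *\<^sub>v x)) * (y \<bullet> (A *\<^sub>v y))" by (rule psd_cauchy_schwarz[OF A sym psd x y])
  also have "\<dots> \<le> (lambda_max A * (x \<bullet> x)) * (lambda_max A * (y \<bullet> y))"
    using le_lam[OF x] le_lam[OF y] psd[OF x] psd[OF y] by (intro mult_mono) auto
  finally have "y \<bullet> y \<le> (lambda_max A)^2 * (x \<bullet> x)"
    using scalar_prod_self_nonneg[of y] scalar_prod_self_nonneg[of x] lam
    by (cases "y \<bullet> y = 0") (auto simp: power2_eq_square algebra_simps mult_le_cancel_left)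
  then have "sqrt (y \<bullet> y) \<le> sqrt ((lambda_max A)^2 * (x \<bullet> x))" by simp
  then show "vnorm2 (A *\<^sub>v x) \<le> lambda_max A * vnorm2 x"
    using lam unfolding vnorm2_eq_sqrt_scalar_prod y_def by (simp add: real_sqrt_mult)
qed

lemma laplacian_carrier: "B \<in> carrier_mat n d \<Longrightarrow> laplacian B \<in> carrier_mat n n"
  unfolding laplacian_def by simp

lemma laplacian_symmetric: "B \<in> carrier_mat n d \<Longrightarrow> transpose_mat (laplacian B) = laplacian B"
  unfolding laplacian_def by (simp add: transpose_mult[of B n d])

lemma laplacian_psd:
  assumes B: "B \<in> carrier_mat n d" and x: "x \<in> carrier_vec n"
  shows "0 \<le> x \<bullet> (laplacian B *\<^sub>v x)"
proof -
  have "x \<bullet> (laplacian B *\<^sub>v x) = (transpose_mat B *\<^sub>v x) \<bullet> (transpose_mat B *\<^sub>v x)"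
    using B x transpose_vec_mult_scalar[OF B _ x, of "transpose_mat B *\<^sub>v x"]
    unfolding laplacian_def by simp
  then show ?thesis by (simp add: scalar_prod_self_nonneg)
qed

section \<open>Truncated exponential series\<close>

lemma pow_mat_Suc_left:
  assumes A: "A \<in> carrier_mat n n"
  shows "A ^\<^sub>m Suc m = A * A ^\<^sub>m m"
proof (induction m)
  case 0 then show ?case using A by simp
next
  case (Suc m)
  have "A ^\<^sub>m Suc (Suc m) = (A * A ^\<^sub>m m) * A" using Suc by simp
  also have "\<dots> = A * A ^\<^sub>m Suc m" using A by (simp add: assoc_mult_mat[of _ n n _ n _ n])
  finally show ?case .
qed

lemma norm_pow_mat_mult_vec_le:
  fixes A :: "real mat"
  assumes A: "A \<in> carrier_mat n n" and "0 \<le> \<rho>"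
    and bound: "\<And>x. x \<in> carrier_vec n \<Longrightarrow> vnorm2 (A *\<^sub>v x) \<le> \<rho> * vnorm2 x"
  shows "x \<in> carrier_vec n \<Longrightarrow> vnorm2 (A ^\<^sub>m m *\<^sub>v x) \<le> \<rho> ^ m * vnorm2 x"
proof (induction m arbitrary: x)
  case 0 then show ?case using A by simp
next
  case (Suc m)
  have "A ^\<^sub>m Suc m *\<^sub>v x = A ^\<^sub>m m *\<^sub>v (A *\<^sub>v x)"
    using A Suc.prems by (simp add: assoc_mult_mat_vec[of _ n n _ n])
  also have "vnorm2 \<dots> \<le> \<rho> ^ m * vnorm2 (A *\<^sub>v x)" using A Suc by simp
  also have "\<dots> \<le> \<rho> ^ m * (\<rho> * vnorm2 x)"
    using bound[OF Suc.prems] \<open>0 \<le> \<rho>\<close> by (intro mult_left_mono) auto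
  finally show ?case by (simp add: ac_simps)
qed

lemma abs_pow_mat_index_le:
  fixes A :: "real mat"
  assumes A: "A \<in> carrier_mat n n" and "0 \<le> \<rho>"
    and bound: "\<And>x. x \<in> carrier_vec n \<Longrightarrow> vnorm2 (A *\<^sub>v x) \<le> \<rho> * vnorm2 x"
    and ij: "i < n" "j < n"
  shows "\<bar>(A ^\<^sub>m m) $$ (i, j)\<bar> \<le> \<rho> ^ m"
proof -
  have "(A ^\<^sub>m m) $$ (i, j) = (A ^\<^sub>m m *\<^sub>v unit_vec n j) $ i"
    using A ij by simp
  also have "\<bar>\<dots>\<bar> \<le> vnorm2 (A ^\<^sub>m m *\<^sub>v unit_vec n j)"
    using A ij by (intro abs_index_le_vnorm2) simp
  also have "\<dots> \<le> \<rho> ^ m"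
    using norm_pow_mat_mult_vec_le[OF assms(1-3), of "unit_vec n j" m] vnorm2_unit_vec[OF ij(2)] by simp
  finally show ?thesis .
qed

definition mat_exp_taylor :: "nat \<Rightarrow> real mat \<Rightarrow> real mat" where
  "mat_exp_taylor N A = mat (dim_row A) (dim_col A)
      (\<lambda>(i,j). \<Sum>m<N. (A ^\<^sub>m m) $$ (i,j) / fact m)"

lemma mat_exp_taylor_carrier: "A \<in> carrier_mat n n \<Longrightarrow> mat_exp_taylor N A \<in> carrier_mat n n"
  unfolding mat_exp_taylor_def by simp

lemma mat_exp_taylor_mult_vec_index:
  assumes A: "A \<in> carrier_mat n n" and v: "v \<in> carrier_vec n" and i: "i < n"
  shows "(mat_exp_taylor N A *\<^sub>v v) $ i = (\<Sum>m<N. (A ^\<^sub>m m *\<^sub>v v) $ i / fact m)"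
proof -
  have "(mat_exp_taylor N A *\<^sub>v v) $ i = (\<Sum>j<n. (\<Sum>m<N. (A ^\<^sub>m m) $$ (i,j) / fact m) * v $ j)"
    using A v i by (simp add: mat_exp_taylor_def scalar_prod_def lessThan_atLeast0 mult.commute)
  also have "\<dots> = (\<Sum>m<N. (\<Sum>j<n. (A ^\<^sub>m m) $$ (i,j) * v $ j) / fact m)"
    by (simp add: sum_distrib_right sum_divide_distrib sum.swap[of _ "{..<n}"])
  also have "\<dots> = (\<Sum>m<N. (A ^\<^sub>m m *\<^sub>v v) $ i / fact m)"
    using A v i by (simp add: scalar_prod_def lessThan_atLeast0)
  finally show ?thesis .
qed

lemma mat_exp_taylor_Suc_mult_vec:
  assumes A: "A \<in> carrier_mat n n" and v: "v \<in> carrier_vec n"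
  shows "mat_exp_taylor (Suc N) A *\<^sub>v v = mat_exp_taylor N A *\<^sub>v v + (1 / fact N) \<cdot>\<^sub>v (A ^\<^sub>m N *\<^sub>v v)"
proof (rule eq_vecI)
  fix i assume "i < dim_vec (mat_exp_taylor N A *\<^sub>v v + (1 / fact N) \<cdot>\<^sub>v (A ^\<^sub>m N *\<^sub>v v))"
  then have i: "i < n" using A by simp
  show "(mat_exp_taylor (Suc N) A *\<^sub>v v) $ i
      = (mat_exp_taylor N A *\<^sub>v v + (1 / fact N) \<cdot>\<^sub>v (A ^\<^sub>m N *\<^sub>v v)) $ i"
    using A i carrier_matD[OF mat_exp_taylor_carrier[OF A, of N]]
    by (simp del: index_mult_mat_vec add: mat_exp_taylor_mult_vec_index[OF A v i])
qed (use A carrier_matD[OF mat_exp_taylor_carrier[OF A, of N]]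
       carrier_matD[OF mat_exp_taylor_carrier[OF A, of "Suc N"]] in simp)

lemma mat_exp_mult_vec_index_sums:
  fixes A :: "real mat"
  assumes A: "A \<in> carrier_mat n n" and "0 \<le> \<rho>"
    and bound: "\<And>x. x \<in> carrier_vec n \<Longrightarrow> vnorm2 (A *\<^sub>v x) \<le> \<rho> * vnorm2 x"
    and v: "v \<in> carrier_vec n" and i: "i < n"
  shows "(\<lambda>m. (A ^\<^sub>m m *\<^sub>v v) $ i / fact m) sums (mat_exp A *\<^sub>v v) $ i"
proof -
  have "(\<lambda>m. (A ^\<^sub>m m) $$ (i, j) / fact m) sums (mat_exp A $$ (i, j))" if j: "j < n" for j
  proof -
    have "summable (\<lambda>m. (A ^\<^sub>m m) $$ (i, j) / fact m)"
    proof (rule summable_comparison_test[OF _ summable_exp[of \<rho>]], intro exI allI impI)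
      fix m
      show "norm ((A ^\<^sub>m m) $$ (i, j) / fact m) \<le> inverse (fact m) * \<rho> ^ m"
        using abs_pow_mat_index_le[OF assms(1-3) i j, of m]
        by (simp add: divide_inverse mult.commute abs_mult mult_left_mono)
    qed
    then show ?thesis using A i j by (simp add: mat_exp_def summable_sums)
  qed
  then have "(\<lambda>m. \<Sum>j<n. (A ^\<^sub>m m) $$ (i, j) / fact m * v $ j) sums (\<Sum>j<n. mat_exp A $$ (i, j) * v $ j)"
    by (intro sums_sum sums_mult2) auto
  then show ?thesis
    using A v i
    by (simp add: mat_exp_def scalar_prod_def lessThan_atLeast0 sum_divide_distrib ac_simps)
qed

lemma norm_mat_exp_taylor_error_le:
  fixes A :: "real mat"
  assumes A: "A \<in> carrier_mat n n" and "0 \<le> \<rho>"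
    and bound: "\<And>x. x \<in> carrier_vec n \<Longrightarrow> vnorm2 (A *\<^sub>v x) \<le> \<rho> * vnorm2 x"
    and v: "v \<in> carrier_vec n"
  shows "vnorm2 (mat_exp_taylor N A *\<^sub>v v - mat_exp A *\<^sub>v v)
           \<le> (\<Sum>m. \<rho> ^ (m + N) / fact (m + N)) * vnorm2 v"
proof -
  define f where "f m i = (1 / fact (m + N)) * (A ^\<^sub>m (m + N) *\<^sub>v v) $ i" for m i
  define E where "E = mat_exp_taylor N A *\<^sub>v v - mat_exp A *\<^sub>v v"
  have dim_E: "dim_vec E = n" using A by (simp add: E_def mat_exp_taylor_def mat_exp_def)
  have "(\<lambda>m. f m i) sums - E $ i" if i: "i < n" for i
  proof -
    have "(\<lambda>m. f m i) sums ((mat_exp A *\<^sub>v v) $ i - (\<Sum>m<N. (A ^\<^sub>m m *\<^sub>v v) $ i / fact m))"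
      using sums_split_initial_segment[OF mat_exp_mult_vec_index_sums[OF assms(1-4) i], of N]
      by (simp add: f_def)
    moreover have "E $ i = (mat_exp_taylor N A *\<^sub>v v) $ i - (mat_exp A *\<^sub>v v) $ i"
      unfolding E_def using A i by (simp add: mat_exp_def)
    ultimately show ?thesis unfolding mat_exp_taylor_mult_vec_index[OF A v i] by simp
  qed
  moreover have "L2_set (f m) {..<n} \<le> \<rho> ^ (m + N) / fact (m + N) * vnorm2 v" for m
  proof -
    have "L2_set (f m) {..<n} = vnorm2 (A ^\<^sub>m (m + N) *\<^sub>v v) / fact (m + N)"
      using A unfolding f_def L2_set_scale vnorm2_eq_L2_set by simp
    also have "\<dots> \<le> \<rho> ^ (m + N) * vnorm2 v / fact (m + N)"
      by (intro divide_right_mono norm_pow_mat_mult_vec_le[OF assms(1-3) v] fact_ge_zero)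
    finally show ?thesis by simp
  qed
  moreover have tail: "summable (\<lambda>m. \<rho> ^ (m + N) / fact (m + N))"
    using summable_ignore_initial_segment[OF summable_exp[of \<rho>], of N]
    by (simp add: divide_inverse mult.commute)
  ultimately have "L2_set (\<lambda>i. - E $ i) {..<n} \<le> (\<Sum>m. \<rho> ^ (m + N) / fact (m + N) * vnorm2 v)"
    by (intro L2_set_suminf_le summable_mult2) auto
  also have "\<dots> = (\<Sum>m. \<rho> ^ (m + N) / fact (m + N)) * vnorm2 v"
    by (rule suminf_mult2[OF tail, symmetric])
  also have "L2_set (\<lambda>i. - E $ i) {..<n} = vnorm2 E"
    unfolding vnorm2_eq_L2_set dim_E L2_set_def by simp
  finally show ?thesis unfolding E_def .
qed

lemma exp_le_two_powr: "0 \<le> (x :: real) \<Longrightarrow> exp (2 * x) \<le> 2 powr (8 * x)"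
proof -
  assume "0 \<le> x"
  have "(1/2::real) - (1/2)^2 \<le> ln (1 + 1/2)" by (rule ln_one_plus_pos_lower_bound) auto
  also have "\<dots> \<le> ln 2" by simp
  finally have "1/4 \<le> ln (2::real)" by (simp add: power2_eq_square)
  then have "2 * x \<le> 8 * x * ln 2" using \<open>0 \<le> x\<close> mult_left_mono[of "1/4" "ln 2" "8 * x"] by simp
  then show ?thesis unfolding powr_def by simp
qed

lemma exp_series_tail_le:
  fixes x :: real
  assumes "0 \<le> x"
  shows "(\<Sum>m. x ^ (m + N) / fact (m + N)) \<le> 2 powr (- real N + 8 * x + 1)"
proof -
  have exp_tail: "summable (\<lambda>m. y ^ (m + N) / fact (m + N))" for y :: real
    using summable_ignore_initial_segment[OF summable_exp[of y], of N]
    by (simp add: divide_inverse mult.commute)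
  have le: "x ^ (m + N) / fact (m + N) \<le> (1/2) ^ N * ((2 * x) ^ (m + N) / fact (m + N))" for m
  proof -
    have "x ^ (m + N) = (1/2) ^ (m + N) * (2 * x) ^ (m + N)"
      by (metis power_mult_distrib mult.assoc divide_self_if mult_1 times_divide_eq_left zero_neq_numeral)
    also have "\<dots> \<le> (1/2) ^ N * (2 * x) ^ (m + N)"
      using \<open>0 \<le> x\<close> by (intro mult_right_mono power_decreasing) auto
    finally show ?thesis by (simp add: divide_right_mono)
  qed
  have "(\<Sum>m. x ^ (m + N) / fact (m + N)) \<le> (\<Sum>m. (1/2) ^ N * ((2 * x) ^ (m + N) / fact (m + N)))"
    by (intro suminf_le le exp_tail summable_mult)
  also have "\<dots> = (1/2) ^ N * (\<Sum>m. (2 * x) ^ (m + N) / fact (m + N))"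
    by (intro suminf_mult exp_tail)
  also have "(\<Sum>m. (2 * x) ^ (m + N) / fact (m + N)) \<le> exp (2 * x)"
  proof -
    have "(\<lambda>m. (2 * x) ^ m / fact m) sums exp (2 * x)"
      using exp_converges[of "2 * x"] by (simp add: divide_inverse mult.commute)
    then have "exp (2 * x) = (\<Sum>m. (2 * x) ^ (m + N) / fact (m + N)) + (\<Sum>m<N. (2 * x) ^ m / fact m)"
      using suminf_split_initial_segment[of "\<lambda>m. (2 * x) ^ m / fact m" N] by (simp add: sums_iff)
    moreover have "0 \<le> (\<Sum>m<N. (2 * x) ^ m / fact m)" using \<open>0 \<le> x\<close> by (intro sum_nonneg) auto
    ultimately show ?thesis by linarith
  qed
  then have "(1/2) ^ N * (\<Sum>m. (2 * x) ^ (m + N) / fact (m + N)) \<le> (1/2) ^ N * 2 powr (8 * x)"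
    using exp_le_two_powr[OF \<open>0 \<le> x\<close>] by (intro mult_left_mono) auto
  also have "(1/2::real) ^ N = 2 powr (- real N)"
    by (simp add: powr_minus powr_realpow power_one_over inverse_eq_divide)
  also have "2 powr (- real N) * 2 powr (8 * x) = 2 powr (- real N + 8 * x)"
    by (rule powr_add[symmetric])
  also have "\<dots> \<le> 2 powr (- real N + 8 * x + 1)" by (intro powr_mono) auto
  finally show ?thesis .
qed

section \<open>A linear transformer computing the truncated heat kernel\<close>

definition selection_mat :: "nat \<Rightarrow> (nat \<Rightarrow> nat) \<Rightarrow> (nat \<Rightarrow> real) \<Rightarrow> real mat" where
  "selection_mat D \<sigma> w = mat D D (\<lambda>(a, b). if b = \<sigma> a then w a else 0)"

lemma selection_mat_carrier [simp]: "selection_mat D \<sigma> w \<in> carrier_mat D D"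
  unfolding selection_mat_def by simp

lemma index_selection_mat_mult:
  assumes Z: "Z \<in> carrier_mat D n" and a: "a < D" and \<sigma>a: "\<sigma> a < D" and j: "j < n"
  shows "(selection_mat D \<sigma> w * Z) $$ (a, j) = w a * Z $$ (\<sigma> a, j)"
proof -
  have "(selection_mat D \<sigma> w * Z) $$ (a, j) = (\<Sum>b\<in>{0..<D}. (if b = \<sigma> a then w a else 0) * Z $$ (b, j))"
    using Z a j by (simp add: selection_mat_def scalar_prod_def)
  also have "\<dots> = (\<Sum>b\<in>{0..<D}. if b = \<sigma> a then w a * Z $$ (b, j) else 0)"
    by (intro sum.cong) auto
  also have "\<dots> = w a * Z $$ (\<sigma> a, j)" using \<sigma>a by simp
  finally show ?thesis .
qed

lemma row_selection_mat_mult: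
  assumes Z: "Z \<in> carrier_mat D n" and a: "a < D" and \<sigma>a: "\<sigma> a < D"
  shows "row (selection_mat D \<sigma> w * Z) a = w a \<cdot>\<^sub>v row Z (\<sigma> a)"
proof (rule eq_vecI)
  have SZ: "selection_mat D \<sigma> w * Z \<in> carrier_mat D n" by (rule mult_carrier_mat[OF _ Z]) simp
  fix j assume "j < dim_vec (w a \<cdot>\<^sub>v row Z (\<sigma> a))"
  then have j: "j < n" using Z by simp
  have "row (selection_mat D \<sigma> w * Z) a $ j = (selection_mat D \<sigma> w * Z) $$ (a, j)"
    using carrier_matD[OF SZ] a j by simp
  also have "\<dots> = (w a \<cdot>\<^sub>v row Z (\<sigma> a)) $ j"
    using index_selection_mat_mult[of Z D n a \<sigma>, OF Z a \<sigma>a j] carrier_matD[OF Z] \<sigma>a j by simp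
  finally show "row (selection_mat D \<sigma> w * Z) a $ j = (w a \<cdot>\<^sub>v row Z (\<sigma> a)) $ j" .
qed (use Z in simp)

lemma row_mult_symmetric:
  fixes A L :: "'a :: comm_semiring_0 mat"
  assumes A: "A \<in> carrier_mat r n" and L: "L \<in> carrier_mat n n" and sym: "transpose_mat L = L"
    and a: "a < r"
  shows "row (A * L) a = L *\<^sub>v row A a"
proof (rule eq_vecI)
  fix j assume "j < dim_vec (L *\<^sub>v row A a)"
  then have j: "j < n" using L by simp
  have "col L j = row L j" using row_transpose[of j L] L j sym by simp
  then show "row (A * L) a $ j = (L *\<^sub>v row A a) $ j"
    using A L a j comm_scalar_prod[of "row A a" n "row L j"] by simp
qed (use A L a in simp)

lemma row_add_carrier:
  "A \<in> carrier_mat nr nc \<Longrightarrow> B \<in> carrier_mat nr nc \<Longrightarrow> i < nr \<Longrightarrow> row (A + B) i = row A i + row B i"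
  by (rule row_add) auto

definition heat_WV :: "nat \<Rightarrow> nat \<Rightarrow> real \<Rightarrow> nat \<Rightarrow> real mat" where
  "heat_WV d k s l = selection_mat (d + 2 * k) id
     (\<lambda>a. if d \<le> a \<and> a < d + k then - s / real (Suc l) else 0)"

definition heat_WK :: "nat \<Rightarrow> nat \<Rightarrow> real mat" where
  "heat_WK d k = selection_mat (d + 2 * k) id (\<lambda>a. if a < d then 1 else 0)"

definition heat_WR :: "nat \<Rightarrow> nat \<Rightarrow> real mat" where
  "heat_WR d k = selection_mat (d + 2 * k) (\<lambda>a. if d + k \<le> a then a - k else a)
     (\<lambda>a. if a < d then 0 else if a < d + k then -1 else 1)"

definition heat_state :: "nat \<Rightarrow> nat \<Rightarrow> real mat \<Rightarrow> real mat \<Rightarrow> real \<Rightarrow> nat \<Rightarrow> real mat" where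
  "heat_state d k B Psi s l = mat\<^sub>r (d + 2 * k) (dim_row B) (\<lambda>a.
     if a < d then col B a
     else if a < d + k then (1 / fact l) \<cdot>\<^sub>v (((- s) \<cdot>\<^sub>m laplacian B) ^\<^sub>m l *\<^sub>v col Psi (a - d))
     else mat_exp_taylor l ((- s) \<cdot>\<^sub>m laplacian B) *\<^sub>v col Psi (a - d - k))"

lemma heat_state_carrier: "heat_state d k B Psi s l \<in> carrier_mat (d + 2 * k) (dim_row B)"
  unfolding heat_state_def by simp

lemma row_heat_state:
  assumes "a < d + 2 * k"
  shows "row (heat_state d k B Psi s l) a =
     (if a < d then col B a
      else if a < d + k then (1 / fact l) \<cdot>\<^sub>v (((- s) \<cdot>\<^sub>m laplacian B) ^\<^sub>m l *\<^sub>v col Psi (a - d))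
      else mat_exp_taylor l ((- s) \<cdot>\<^sub>m laplacian B) *\<^sub>v col Psi (a - d - k))"
  unfolding heat_state_def using assms
  by (intro row_mat_of_row_fun) (auto simp: laplacian_def mat_exp_taylor_def)

lemma input_Z0_eq_heat_state:
  assumes B: "B \<in> carrier_mat n d" and Psi: "Psi \<in> carrier_mat n k"
  shows "input_Z0 n d k B Psi = heat_state d k B Psi s 0"
proof (rule eq_rowI)
  define M where "M = (- s) \<cdot>\<^sub>m laplacian B"
  have M: "M \<in> carrier_mat n n" using laplacian_carrier[OF B] by (simp add: M_def)
  have \<psi>: "col Psi i \<in> carrier_vec n" for i using Psi by (intro carrier_vecI) simp
  fix a assume "a < dim_row (heat_state d k B Psi s 0)"
  then have a: "a < d + 2 * k" using heat_state_carrier[of d k B Psi s 0] by simp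
  have row_input: "row (input_Z0 n d k B Psi) a = vec n (\<lambda>j.
      if a < d then B $$ (j, a) else if a < d + k then Psi $$ (j, a - d) else 0)"
    using a by (simp add: input_Z0_def)
  have row_0: "row (heat_state d k B Psi s 0) a = (if a < d then col B a
      else if a < d + k then col Psi (a - d) else mat_exp_taylor 0 M *\<^sub>v col Psi (a - d - k))"
    using row_heat_state[OF a, of B Psi s 0] M \<psi> carrier_matD[OF laplacian_carrier[OF B]]
    by (simp add: M_def)
  consider "a < d" | "d \<le> a" "a < d + k" | "d + k \<le> a" by linarith
  then show "row (input_Z0 n d k B Psi) a = row (heat_state d k B Psi s 0) a"
  proof cases
    case 1
    then show ?thesis unfolding row_input row_0 using B by (intro eq_vecI) auto
  next
    case 2
    then show ?thesis unfolding row_input row_0 using Psi by (intro eq_vecI) auto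
  next
    case 3
    have "mat_exp_taylor 0 M *\<^sub>v col Psi (a - d - k) = 0\<^sub>v n"
      using mat_exp_taylor_mult_vec_index[where N = 0, OF M \<psi>[of "a - d - k"]]
        carrier_matD[OF mat_exp_taylor_carrier[OF M, of 0]]
      by (intro eq_vecI) auto
    then show ?thesis unfolding row_input row_0 using 3 by (auto simp: zero_vec_def)
  qed
next
  show "dim_row (input_Z0 n d k B Psi) = dim_row (heat_state d k B Psi s 0)"
    "dim_col (input_Z0 n d k B Psi) = dim_col (heat_state d k B Psi s 0)"
    using heat_state_carrier[of d k B Psi s 0] B by (auto simp: input_Z0_def)
qed

lemma heat_state_gram:
  assumes B: "B \<in> carrier_mat n d"
  shows "transpose_mat (heat_state d k B Psi s l) * heat_WK d k * heat_state d k B Psi s l = laplacian B"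
proof -
  define Z where "Z = heat_state d k B Psi s l"
  have Z: "Z \<in> carrier_mat (d + 2 * k) n" using heat_state_carrier B unfolding Z_def by auto
  have WK: "heat_WK d k \<in> carrier_mat (d + 2 * k) (d + 2 * k)" by (simp add: heat_WK_def)
  have top: "Z $$ (a, u) = B $$ (u, a)" if "a < d" "u < n" for a u
    using that B by (simp add: Z_def heat_state_def)
  have WKZ: "(heat_WK d k * Z) $$ (a, v) = (if a < d then Z $$ (a, v) else 0)"
    if "a < d + 2 * k" "v < n" for a v
    using index_selection_mat_mult[of Z "d + 2 * k" n a id, OF Z that(1) _ that(2)] that
    by (simp add: heat_WK_def)
  have "(transpose_mat Z * (heat_WK d k * Z)) $$ (u, v) = laplacian B $$ (u, v)"
    if u: "u < n" and v: "v < n" for u v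
  proof -
    have "(transpose_mat Z * (heat_WK d k * Z)) $$ (u, v)
        = (\<Sum>a\<in>{0..<d + 2 * k}. Z $$ (a, u) * (heat_WK d k * Z) $$ (a, v))"
      using Z WK u v by (simp add: scalar_prod_def)
    also have "\<dots> = (\<Sum>a\<in>{0..<d}. B $$ (u, a) * B $$ (v, a))"
      by (rule sum.mono_neutral_cong_right) (auto simp: WKZ top u v)
    also have "\<dots> = laplacian B $$ (u, v)"
      using B u v by (simp add: laplacian_def scalar_prod_def)
    finally show ?thesis .
  qed
  moreover have "transpose_mat Z * heat_WK d k * Z = transpose_mat Z * (heat_WK d k * Z)"
    using Z WK by (intro assoc_mult_mat[of _ n "d + 2 * k"]) auto
  ultimately show ?thesis
    unfolding Z_def[symmetric] using Z WK laplacian_carrier[OF B] by (intro eq_matI) auto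
qed

lemma heat_state_attention:
  fixes k l :: nat and s :: real and Psi :: "real mat"
  assumes B: "B \<in> carrier_mat n d"
  defines "Z \<equiv> heat_state d k B Psi s l"
  shows "heat_WV d k s l * Z * transpose_mat Z * transpose_mat (1\<^sub>m (d + 2 * k)) * heat_WK d k * Z
       = (heat_WV d k s l * Z) * laplacian B"
proof -
  define D where "D = d + 2 * k"
  have Z: "Z \<in> carrier_mat D n" using heat_state_carrier B unfolding Z_def D_def by auto
  have ZT: "transpose_mat Z \<in> carrier_mat n D" using Z by simp
  have WV: "heat_WV d k s l \<in> carrier_mat D D" by (simp add: heat_WV_def D_def)
  have WK: "heat_WK d k \<in> carrier_mat D D" by (simp add: heat_WK_def D_def)
  have WVZ: "heat_WV d k s l * Z \<in> carrier_mat D n" by (rule mult_carrier_mat[OF WV Z])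
  have "heat_WV d k s l * Z * transpose_mat Z * transpose_mat (1\<^sub>m D) * heat_WK d k * Z
      = heat_WV d k s l * Z * transpose_mat Z * heat_WK d k * Z"
    using WVZ ZT by simp
  also have "\<dots> = (heat_WV d k s l * Z) * (transpose_mat Z * heat_WK d k * Z)"
    using ZT WK Z
    by (simp only: assoc_mult_mat[OF WVZ ZT WK] assoc_mult_mat[OF WVZ _ Z] mult_carrier_mat)
  also have "transpose_mat Z * heat_WK d k * Z = laplacian B"
    unfolding Z_def by (rule heat_state_gram[OF B])
  finally show ?thesis unfolding D_def .
qed

lemma row_heat_layer:
  fixes k l :: nat and s :: real and Psi :: "real mat"
  assumes B: "B \<in> carrier_mat n d" and a: "a < d + 2 * k"
  defines "Z \<equiv> heat_state d k B Psi s l"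
  shows "row (tf_layer (heat_WV d k s l) (1\<^sub>m (d + 2 * k)) (heat_WK d k) (heat_WR d k) Z) a
       = row Z a + (if d \<le> a \<and> a < d + k then - s / real (Suc l) else 0) \<cdot>\<^sub>v (laplacian B *\<^sub>v row Z a)
         + (if a < d then 0 else if a < d + k then -1 else 1)
           \<cdot>\<^sub>v row Z (if d + k \<le> a then a - k else a)"
proof -
  define D where "D = d + 2 * k"
  define L where "L = laplacian B"
  have a': "a < D" using a by (simp add: D_def)
  have Z: "Z \<in> carrier_mat D n" using heat_state_carrier B unfolding Z_def D_def by auto
  have L: "L \<in> carrier_mat n n" and sym: "transpose_mat L = L"
    using laplacian_carrier[OF B] laplacian_symmetric[OF B] by (auto simp: L_def)
  have WV: "heat_WV d k s l \<in> carrier_mat D D" by (simp add: heat_WV_def D_def)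
  have WR: "heat_WR d k \<in> carrier_mat D D" by (simp add: heat_WR_def D_def)
  have WVZ: "heat_WV d k s l * Z \<in> carrier_mat D n" by (rule mult_carrier_mat[OF WV Z])
  have P: "heat_WV d k s l * Z * L \<in> carrier_mat D n" by (rule mult_carrier_mat[OF WVZ L])
  have R: "heat_WR d k * Z \<in> carrier_mat D n" by (rule mult_carrier_mat[OF WR Z])
  have WV_row: "row (heat_WV d k s l * Z) a
      = (if d \<le> a \<and> a < d + k then - s / real (Suc l) else 0) \<cdot>\<^sub>v row Z a"
    unfolding heat_WV_def D_def[symmetric] using row_selection_mat_mult[OF Z a', of id] a' by simp
  have WR_row: "row (heat_WR d k * Z) a = (if a < d then 0 else if a < d + k then -1 else 1)
      \<cdot>\<^sub>v row Z (if d + k \<le> a then a - k else a)"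
    unfolding heat_WR_def D_def[symmetric]
    using row_selection_mat_mult[OF Z a', of "\<lambda>a. if d + k \<le> a then a - k else a"] a'
    by (simp add: D_def)
  have attn: "heat_WV d k s l * Z * transpose_mat Z * transpose_mat (1\<^sub>m (d + 2 * k)) * heat_WK d k * Z
      = (heat_WV d k s l * Z) * L"
    unfolding Z_def L_def by (rule heat_state_attention[OF B])
  have "L *\<^sub>v (c \<cdot>\<^sub>v row Z a) = c \<cdot>\<^sub>v (L *\<^sub>v row Z a)" for c
    using L Z a' by (intro mult_mat_vec) auto
  then show ?thesis
    unfolding tf_layer_def attn L_def[symmetric]
    by (simp only: row_add_carrier[OF add_carrier_mat[OF P, of Z] R a'] row_add_carrier[OF Z P a']
        row_mult_symmetric[OF WVZ L sym a'] WV_row WR_row)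
qed

lemma heat_layer_taylor_term:
  fixes L :: "real mat"
  assumes L: "L \<in> carrier_mat n n" and w: "w \<in> carrier_vec n"
  shows "(1 / fact l) \<cdot>\<^sub>v w + (- s / real (Suc l)) \<cdot>\<^sub>v (L *\<^sub>v ((1 / fact l) \<cdot>\<^sub>v w))
           + (-1) \<cdot>\<^sub>v ((1 / fact l) \<cdot>\<^sub>v w)
         = (1 / fact (Suc l)) \<cdot>\<^sub>v (((- s) \<cdot>\<^sub>m L) *\<^sub>v w)"
proof -
  define \<beta> where "\<beta> = - s / fact (Suc l)"
  have Lw: "L *\<^sub>v w \<in> carrier_vec n" using L w by simp
  have "(- s / real (Suc l)) \<cdot>\<^sub>v (L *\<^sub>v ((1 / fact l) \<cdot>\<^sub>v w)) = \<beta> \<cdot>\<^sub>v (L *\<^sub>v w)"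
    using L w by (simp add: mult_mat_vec smult_smult_assoc \<beta>_def)
  then have "(1 / fact l) \<cdot>\<^sub>v w + (- s / real (Suc l)) \<cdot>\<^sub>v (L *\<^sub>v ((1 / fact l) \<cdot>\<^sub>v w))
      + (-1) \<cdot>\<^sub>v ((1 / fact l) \<cdot>\<^sub>v w) = \<beta> \<cdot>\<^sub>v (L *\<^sub>v w)"
    using w Lw carrier_matD[OF L] by (intro eq_vecI) auto
  also have "\<dots> = (1 / fact (Suc l)) \<cdot>\<^sub>v ((- s) \<cdot>\<^sub>v (L *\<^sub>v w))"
    by (simp add: smult_smult_assoc \<beta>_def)
  also have "(- s) \<cdot>\<^sub>v (L *\<^sub>v w) = ((- s) \<cdot>\<^sub>m L) *\<^sub>v w"
    by (rule smult_mat_mult_vec[OF L w, symmetric])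
  finally show ?thesis .
qed

lemma heat_layer_step:
  assumes B: "B \<in> carrier_mat n d" and Psi: "Psi \<in> carrier_mat n k"
  shows "tf_layer (heat_WV d k s l) (1\<^sub>m (d + 2 * k)) (heat_WK d k) (heat_WR d k)
           (heat_state d k B Psi s l) = heat_state d k B Psi s (Suc l)"
    (is "?layer = _")
proof (rule eq_rowI)
  define Z where "Z = heat_state d k B Psi s l"
  define L where "L = laplacian B"
  define M where "M = (- s) \<cdot>\<^sub>m L"
  have L: "L \<in> carrier_mat n n" using laplacian_carrier[OF B] by (simp add: L_def)
  have M: "M \<in> carrier_mat n n" using L by (simp add: M_def)
  have \<psi>: "col Psi i \<in> carrier_vec n" for i using Psi by (intro carrier_vecI) simp
  have row_Z: "row Z b = (if b < d then col B b
      else if b < d + k then (1 / fact l) \<cdot>\<^sub>v (M ^\<^sub>m l *\<^sub>v col Psi (b - d))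
      else mat_exp_taylor l M *\<^sub>v col Psi (b - d - k))" if "b < d + 2 * k" for b
    using row_heat_state[OF that, of B Psi s l] unfolding Z_def M_def L_def .
  fix a assume "a < dim_row (heat_state d k B Psi s (Suc l))"
  then have a: "a < d + 2 * k" using heat_state_carrier[of d k B Psi s "Suc l"] by simp
  have row_next: "row (heat_state d k B Psi s (Suc l)) a = (if a < d then col B a
      else if a < d + k then (1 / fact (Suc l)) \<cdot>\<^sub>v (M ^\<^sub>m Suc l *\<^sub>v col Psi (a - d))
      else mat_exp_taylor (Suc l) M *\<^sub>v col Psi (a - d - k))"
    using row_heat_state[OF a, of B Psi s "Suc l"] unfolding M_def L_def .
  note row_layer = row_heat_layer[where Psi = Psi and s = s and l = l, OF B a, folded Z_def L_def]
  consider "a < d" | "d \<le> a" "a < d + k" | "d + k \<le> a" by linarith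
  then show "row ?layer a = row (heat_state d k B Psi s (Suc l)) a"
  proof cases
    case 1
    have "row ?layer a = col B a + 0 \<cdot>\<^sub>v (L *\<^sub>v col B a) + 0 \<cdot>\<^sub>v col B a"
      unfolding Z_def[symmetric] row_layer using row_Z[OF a] 1 by simp
    also have "\<dots> = col B a" using B L by (intro eq_vecI) auto
    finally show ?thesis unfolding row_next if_P[OF 1] .
  next
    case 2
    define w where "w = M ^\<^sub>m l *\<^sub>v col Psi (a - d)"
    have w: "w \<in> carrier_vec n" unfolding w_def by (rule mult_mat_vec_carrier[OF pow_carrier_mat[OF M] \<psi>])
    have "row ?layer a = (1 / fact l) \<cdot>\<^sub>v w
        + (- s / real (Suc l)) \<cdot>\<^sub>v (L *\<^sub>v ((1 / fact l) \<cdot>\<^sub>v w)) + (-1) \<cdot>\<^sub>v ((1 / fact l) \<cdot>\<^sub>v w)"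
      unfolding Z_def[symmetric] row_layer using row_Z[OF a] 2 by (simp add: w_def)
    also have "\<dots> = (1 / fact (Suc l)) \<cdot>\<^sub>v (M *\<^sub>v w)"
      unfolding M_def by (rule heat_layer_taylor_term[OF L w])
    also have "M *\<^sub>v w = M ^\<^sub>m Suc l *\<^sub>v col Psi (a - d)"
      unfolding pow_mat_Suc_left[OF M] w_def using M \<psi> by (simp add: assoc_mult_mat_vec[of _ n n _ n])
    finally show ?thesis unfolding row_next if_not_P[OF leD[OF 2(1)]] if_P[OF 2(2)] .
  next
    case 3
    define \<psi>' where "\<psi>' = col Psi (a - d - k)"
    have shift: "a - k < d + 2 * k" "\<not> a - k < d" "a - k < d + k" "a - k - d = a - d - k"
      using a 3 by auto
    have T: "mat_exp_taylor l M *\<^sub>v \<psi>' \<in> carrier_vec n"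
      unfolding \<psi>'_def by (rule mult_mat_vec_carrier[OF mat_exp_taylor_carrier[OF M] \<psi>])
    have "row Z (a - k) = (1 / fact l) \<cdot>\<^sub>v (M ^\<^sub>m l *\<^sub>v \<psi>')"
      using row_Z[OF shift(1)] shift(2-4) by (simp add: \<psi>'_def)
    then have "row ?layer a = mat_exp_taylor l M *\<^sub>v \<psi>' + 0 \<cdot>\<^sub>v (L *\<^sub>v (mat_exp_taylor l M *\<^sub>v \<psi>'))
        + 1 \<cdot>\<^sub>v ((1 / fact l) \<cdot>\<^sub>v (M ^\<^sub>m l *\<^sub>v \<psi>'))"
      unfolding Z_def[symmetric] row_layer using row_Z[OF a] 3 by (simp add: \<psi>'_def)
    also have "\<dots> = mat_exp_taylor l M *\<^sub>v \<psi>' + (1 / fact l) \<cdot>\<^sub>v (M ^\<^sub>m l *\<^sub>v \<psi>')"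
      using T L carrier_matD[OF M] by (intro eq_vecI) auto
    also have "\<dots> = mat_exp_taylor (Suc l) M *\<^sub>v \<psi>'"
      using mat_exp_taylor_Suc_mult_vec[OF M \<psi>[of "a - d - k"]] by (simp add: \<psi>'_def)
    finally show ?thesis unfolding row_next \<psi>'_def using 3 by simp
  qed
next
  have Z: "heat_state d k B Psi s l \<in> carrier_mat (d + 2 * k) n" using heat_state_carrier B by auto
  have WR: "heat_WR d k \<in> carrier_mat (d + 2 * k) (d + 2 * k)" by (simp add: heat_WR_def)
  have "?layer \<in> carrier_mat (d + 2 * k) n"
    unfolding tf_layer_def by (rule add_carrier_mat[OF mult_carrier_mat[OF WR Z]])
  then show "dim_row ?layer = dim_row (heat_state d k B Psi s (Suc l))"
    "dim_col ?layer = dim_col (heat_state d k B Psi s (Suc l))"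
    using heat_state_carrier[of d k B Psi s "Suc l"] B by auto
qed

lemma tf_run_heat_state:
  assumes B: "B \<in> carrier_mat n d" and Psi: "Psi \<in> carrier_mat n k"
  shows "tf_run (heat_WV d k s) (\<lambda>_. 1\<^sub>m (d + 2 * k)) (\<lambda>_. heat_WK d k) (\<lambda>_. heat_WR d k) l
           (input_Z0 n d k B Psi) = heat_state d k B Psi s l"
  by (induction l) (simp_all add: input_Z0_eq_heat_state[OF B Psi] heat_layer_step[OF B Psi])

lemma heat_transformer_error_le:
  assumes B: "B \<in> carrier_mat n d" and n: "0 < n" and Psi: "Psi \<in> carrier_mat n k"
    and i: "i < k" and s: "0 \<le> s"
  shows "vnorm2 (row (tf_run (heat_WV d k s) (\<lambda>_. 1\<^sub>m (d + 2 * k)) (\<lambda>_. heat_WK d k)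
             (\<lambda>_. heat_WR d k) N (input_Z0 n d k B Psi)) (d + k + i)
           - mat_exp ((- s) \<cdot>\<^sub>m laplacian B) *\<^sub>v col Psi i)
         \<le> 2 powr (- real N + 8 * s * lambda_max (laplacian B) + 1) * vnorm2 (col Psi i)"
proof -
  define M where "M = (- s) \<cdot>\<^sub>m laplacian B"
  define \<rho> where "\<rho> = s * lambda_max (laplacian B)"
  have Lap: "laplacian B \<in> carrier_mat n n" by (rule laplacian_carrier[OF B])
  have M: "M \<in> carrier_mat n n" using Lap by (simp add: M_def)
  have \<psi>: "col Psi i \<in> carrier_vec n" using Psi by (intro carrier_vecI) simp
  note spectral = psd_norm_mult_le_lambda_max[OF Lap laplacian_symmetric[OF B] _ n]
  have lam: "0 \<le> lambda_max (laplacian B)"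
    using spectral(1) laplacian_psd[OF B] by blast
  have Lap_bound: "vnorm2 (laplacian B *\<^sub>v x) \<le> lambda_max (laplacian B) * vnorm2 x"
    if x: "x \<in> carrier_vec n" for x
    using spectral(2)[OF _ x] laplacian_psd[OF B] by blast
  have \<rho>: "0 \<le> \<rho>" using lam s by (simp add: \<rho>_def)
  have M_bound: "vnorm2 (M *\<^sub>v x) \<le> \<rho> * vnorm2 x" if x: "x \<in> carrier_vec n" for x
    using mult_left_mono[OF Lap_bound[OF x] s] s
    by (simp add: M_def \<rho>_def smult_mat_mult_vec[OF Lap x] vnorm2_smult mult.assoc)
  have "row (heat_state d k B Psi s N) (d + k + i) = mat_exp_taylor N M *\<^sub>v col Psi i"
    using row_heat_state[of "d + k + i" d k B Psi s N] i by (simp add: M_def)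
  then have "vnorm2 (row (tf_run (heat_WV d k s) (\<lambda>_. 1\<^sub>m (d + 2 * k)) (\<lambda>_. heat_WK d k)
             (\<lambda>_. heat_WR d k) N (input_Z0 n d k B Psi)) (d + k + i) - mat_exp M *\<^sub>v col Psi i)
      \<le> (\<Sum>m. \<rho> ^ (m + N) / fact (m + N)) * vnorm2 (col Psi i)"
    unfolding tf_run_heat_state[OF B Psi] by (simp add: norm_mat_exp_taylor_error_le[OF M \<rho> M_bound \<psi>])
  also have "\<dots> \<le> 2 powr (- real N + 8 * \<rho> + 1) * vnorm2 (col Psi i)"
    by (intro mult_right_mono exp_series_tail_le \<rho>) (simp add: vnorm2_def sum_nonneg)
  finally show ?thesis by (simp add: M_def \<rho>_def mult.assoc)
qed

(* The bound holds for every real n x d matrix B. *)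
theorem lemma3:
  fixes n d k L :: nat and s :: real
  assumes "n \<ge> 1" and "d \<ge> 1" and "k \<ge> 1" and "L \<ge> 1" and "s > 0"
  shows "\<exists>WV WQ WK WR :: nat \<Rightarrow> real mat.
     (\<forall>l<L. WV l \<in> carrier_mat (d+2*k) (d+2*k) \<and> WQ l \<in> carrier_mat (d+2*k) (d+2*k)
           \<and> WK l \<in> carrier_mat (d+2*k) (d+2*k) \<and> WR l \<in> carrier_mat (d+2*k) (d+2*k)) \<and>
     (\<forall>(ed :: nat \<Rightarrow> nat \<times> nat) (r :: nat \<Rightarrow> real) (Psi :: real mat).
        wf_graph n d ed r \<longrightarrow> connected_graph n d ed \<longrightarrow>
        Psi \<in> carrier_mat n k \<longrightarrow>
        (\<forall>i<k. (\<Sum>v<n. Psi $$ (v,i)) = 0) \<longrightarrow>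
        8 * s * lambda_max (laplacian (incidence n d ed r)) \<le> real L \<longrightarrow>
        (\<forall>i<k.
           vnorm2 (row (tf_run WV WQ WK WR L (input_Z0 n d k (incidence n d ed r) Psi)) (d + k + i)
                   - mat_exp ((- s) \<cdot>\<^sub>m laplacian (incidence n d ed r)) *\<^sub>v col Psi i)
           \<le> 2 powr (- real L + 8 * s * lambda_max (laplacian (incidence n d ed r)) + 1)
             * vnorm2 (col Psi i)))"
proof -
  have "incidence n d ed r \<in> carrier_mat n d" for ed r by (simp add: incidence_def)
  with heat_transformer_error_le[of _ n d] assms(1,5)
  have error: "Psi \<in> carrier_mat n k \<Longrightarrow> i < k \<Longrightarrow>
      vnorm2 (row (tf_run (heat_WV d k s) (\<lambda>_. 1\<^sub>m (d + 2 * k)) (\<lambda>_. heat_WK d k) (\<lambda>_. heat_WR d k) L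
          (input_Z0 n d k (incidence n d ed r) Psi)) (d + k + i)
        - mat_exp ((- s) \<cdot>\<^sub>m laplacian (incidence n d ed r)) *\<^sub>v col Psi i)
      \<le> 2 powr (- real L + 8 * s * lambda_max (laplacian (incidence n d ed r)) + 1) * vnorm2 (col Psi i)"
    for ed r Psi i by simp
  show ?thesis
    by (intro exI[of _ "heat_WV d k s"] exI[of _ "\<lambda>_. 1\<^sub>m (d + 2 * k)"] exI[of _ "\<lambda>_. heat_WK d k"]
        exI[of _ "\<lambda>_. heat_WR d k"] conjI allI impI error)
       (auto simp: heat_WV_def heat_WK_def heat_WR_def)
qed

end
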